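(* Consider the constrained imperfect SIR model described in the context. Along any barrier integral curve $(S,I)$ of the MRPI set, with nonzero absolutely continuous adjoint $\lambda=(\lambda_1,\lambda_2)^T$ satisfying $\dot\lambda=\begin{pmatrix}\hat\beta(I)I & -\hat\beta(I)I\\ \alpha(I)S & -\alpha(I)S+\gamma\end{pmatrix}\lambda$, $\lambda(\bar t)=(0,1)^T$, and input $\bar\gamma(t)=\gamma_{\min}$ if $\lambda_2(t)>0$, $\gamma_{\max}$ if $\lambda_2(t)<0$ (arbitrary if $=0$), and such that its endpoint $z=(z_1,z_2)=(S(\bar t),I(\bar t))$ satisfies $z_1\neq0$ and the parameters satisfy $2\beta_{\min}>\beta_{\max}$, the input $\bar\gamma$ only switches at isolated points in time (i.e. $\lambda_2$ does not vanish identically on any nonempty open time interval).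
   Context: Imperfect SIR model: fix $0<\beta_{\min}\le\beta_{\max}$, $0<\gamma_{\min}\le\gamma_{\max}$, $I_{\max}\in(0,1]$, and the pre-designed feedback $\hat\beta(I)=\frac{\beta_{\min}-\beta_{\max}}{I_{\max}}I+\beta_{\max}$. State $x=(S,I)\in\mathbb{R}^2$; the unknown parameter is a Lebesgue measurable disturbance $\gamma:[t_0,\infty[\to[\gamma_{\min},\gamma_{\max}]$; dynamics $\dot S=-\hat\beta(I)SI$, $\dot I=\hat\beta(I)SI-\gamma I$, written $\dot x=f(x,\gamma)$, with constraint $g(x)=I-I_{\max}\le0$. Here $\alpha(I)=2\frac{\beta_{\min}-\beta_{\max}}{I_{\max}}I+\beta_{\max}$, and the displayed adjoint is $\dot\lambda=-(\partial f/\partial x)^T\lambda$; the rule for $\bar\gamma$ maximizes the Hamiltonian $\lambda^Tf$ over $\gamma$. A barrier integral curve reaches $\{I=I_{\max}\}$ tangentially at time $\bar t$ with these adjoint and input conditions, and lies in $\{0\le I\le I_{\max}\}$. *)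

theory Defs
  imports "HOL-Analysis.Analysis"
begin

definition beta_hat :: "real \<Rightarrow> real \<Rightarrow> real \<Rightarrow> real \<Rightarrow> real" where
  "beta_hat bmin bmax Imax I = (bmin - bmax) / Imax * I + bmax"

definition alpha_fun :: "real \<Rightarrow> real \<Rightarrow> real \<Rightarrow> real \<Rightarrow> real" where
  "alpha_fun bmin bmax Imax I = 2 * ((bmin - bmax) / Imax) * I + bmax"

definition abs_cont_on :: "real \<Rightarrow> real \<Rightarrow> (real \<Rightarrow> real) \<Rightarrow> bool" where
  "abs_cont_on a b f \<longleftrightarrow>
     (\<forall>e>0. \<exists>d>0. \<forall>(n::nat) (x::nat \<Rightarrow> real) (y::nat \<Rightarrow> real).
        (\<forall>i<n. a \<le> x i \<and> x i \<le> y i \<and> y i \<le> b) \<and>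
        (\<forall>i<n. \<forall>j<n. i < j \<longrightarrow> y i \<le> x j) \<and>
        (\<Sum>i<n. y i - x i) < d
        \<longrightarrow> (\<Sum>i<n. \<bar>f (y i) - f (x i)\<bar>) < e)"

end

theory Submission
  imports Defs
begin

(* Suppose lam2 vanished on an open interval. At almost every point c of it the adjoint equation
   gives 0 = lam2'(c) = alpha(I c) S(c) lam1(c). There lam1(c) <> 0 because the adjoint never
   vanishes, and alpha(I) >= 2 bmin - bmax > 0 on the constraint set, so S(c) = 0. The susceptible
   equation yields |S'| <= bmax |S| almost everywhere, and for absolutely continuous functions such
   a linear bound keeps S at 0 (a Gronwall argument resting on an almost-everywhere mean value
   inequality, proved with gauge integrals); this contradicts S(tbar) = z1 <> 0. *)

lemma abs_cont_on_subinterval: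
  assumes "abs_cont_on a b f" and "a \<le> a'" and "b' \<le> b"
  shows "abs_cont_on a' b' f"
  unfolding abs_cont_on_def
proof (intro allI impI)
  fix e :: real
  assume "e > 0"
  then obtain d where "d > 0" and d: "\<forall>(n::nat) u v. (\<forall>i<n. a \<le> u i \<and> u i \<le> v i \<and> v i \<le> b) \<and>
      (\<forall>i<n. \<forall>j<n. i < j \<longrightarrow> v i \<le> u j) \<and> (\<Sum>i<n. v i - u i) < d
      \<longrightarrow> (\<Sum>i<n. \<bar>f (v i) - f (u i)\<bar>) < e"
    using assms(1) unfolding abs_cont_on_def by blast
  have "\<forall>i<n. a \<le> u i \<and> u i \<le> v i \<and> v i \<le> b" if "\<forall>i<n. a' \<le> u i \<and> u i \<le> v i \<and> v i \<le> b'"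
    for n and u v :: "nat \<Rightarrow> real"
    using that assms(2,3) by force
  with d \<open>d > 0\<close> show "\<exists>d>0. \<forall>(n::nat) u v. (\<forall>i<n. a' \<le> u i \<and> u i \<le> v i \<and> v i \<le> b') \<and>
      (\<forall>i<n. \<forall>j<n. i < j \<longrightarrow> v i \<le> u j) \<and> (\<Sum>i<n. v i - u i) < d
      \<longrightarrow> (\<Sum>i<n. \<bar>f (v i) - f (u i)\<bar>) < e"
    by blast
qed

lemma abs_cont_on_imp_continuous_on:
  assumes "abs_cont_on a b f"
  shows "continuous_on {a..b} f"
  unfolding continuous_on_iff
proof (intro ballI allI impI)
  fix x e :: real
  assume x: "x \<in> {a..b}" and "e > 0"
  then obtain d where "d > 0" and d: "\<And>(n::nat) u v. (\<forall>i<n. a \<le> u i \<and> u i \<le> v i \<and> v i \<le> b) \<and>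
      (\<forall>i<n. \<forall>j<n. i < j \<longrightarrow> v i \<le> u j) \<and> (\<Sum>i<n. v i - u i) < d
      \<Longrightarrow> (\<Sum>i<n. \<bar>f (v i) - f (u i)\<bar>) < e"
    using assms unfolding abs_cont_on_def by blast
  show "\<exists>d>0. \<forall>x'\<in>{a..b}. dist x' x < d \<longrightarrow> dist (f x') (f x) < e"
  proof (intro exI[of _ d] conjI ballI impI)
    fix x' assume "x' \<in> {a..b}" and "dist x' x < d"
    moreover have "max x x' - min x x' = \<bar>x' - x\<bar>"
      by (simp add: abs_real_def max_def min_def)
    ultimately have "\<bar>f (max x x') - f (min x x')\<bar> < e"
      using x d[of 1 "\<lambda>_. min x x'" "\<lambda>_. max x x'"] by (auto simp: dist_real_def)
    then show "dist (f x') (f x) < e"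
      by (cases "x \<le> x'") (simp_all add: dist_real_def abs_minus_commute)
  qed fact
qed

lemma disjoint_intervals_ordered:
  fixes u v u' v' :: real
  assumes "u < v" and "u' < v'" and "u \<le> u'" and "{u<..<v} \<inter> {u'<..<v'} = {}"
  shows "v \<le> u'"
proof (rule ccontr)
  assume "\<not> v \<le> u'"
  then have "(u' + min v v') / 2 \<in> {u<..<v} \<inter> {u'<..<v'}"
    using assms(1-3) by auto
  with assms(4) show False by blast
qed

lemma disjoint_intervals_enumeration:
  fixes x y :: "'i \<Rightarrow> real"
  assumes "finite X" and "\<And>i. i \<in> X \<Longrightarrow> x i < y i"
    and "disjoint_family_on (\<lambda>i. {x i<..<y i}) X"
  obtains n and \<sigma> :: "nat \<Rightarrow> 'i" where "bij_betw \<sigma> {..<n} X"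
    and "\<And>k j. k < j \<Longrightarrow> j < n \<Longrightarrow> y (\<sigma> k) \<le> x (\<sigma> j)"
proof -
  have before: "y i \<le> x j" if "i \<in> X" "j \<in> X" "i \<noteq> j" "x i \<le> x j" for i j
    using disjoint_intervals_ordered assms(2) that disjoint_family_onD[OF assms(3)] by meson
  have "inj_on x X"
    by (rule inj_onI) (metis before assms(2) order.refl not_less)
  define L where "L = sorted_list_of_set (x ` X)"
  define \<sigma> where "\<sigma> k = the_inv_into X x (L ! k)" for k
  have L: "sorted_wrt (<) L" "distinct L" "set L = x ` X"
    using \<open>finite X\<close> by (simp_all add: L_def)
  have \<sigma>: "\<sigma> k \<in> X" "x (\<sigma> k) = L ! k" if "k < length L" for k
    using L(3) nth_mem[OF that] \<open>inj_on x X\<close>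
    by (auto simp: \<sigma>_def the_inv_into_into the_inv_into_f_f)
  show thesis
  proof (rule that)
    show "bij_betw \<sigma> {..<length L} X"
    proof (rule bij_betw_imageI)
      show "inj_on \<sigma> {..<length L}"
      proof (rule inj_onI)
        fix k j
        assume "k \<in> {..<length L}" "j \<in> {..<length L}" "\<sigma> k = \<sigma> j"
        then have "L ! k = L ! j"
          using \<sigma>(2) by (metis lessThan_iff)
        then show "k = j"
          using L(2) \<open>k \<in> {..<length L}\<close> \<open>j \<in> {..<length L}\<close> by (simp add: nth_eq_iff_index_eq)
      qed
      have "i \<in> \<sigma> ` {..<length L}" if "i \<in> X" for i
      proof -
        have "x i \<in> set L"
          using L(3) that by simp
        then obtain k where "k < length L" "L ! k = x i"
          by (auto simp: in_set_conv_nth)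
        moreover have "\<sigma> k = i"
          using \<open>L ! k = x i\<close> \<open>inj_on x X\<close> that by (simp add: \<sigma>_def the_inv_into_f_f)
        ultimately show ?thesis
          by blast
      qed
      then show "\<sigma> ` {..<length L} = X"
        using \<sigma>(1) by auto
    qed
    show "y (\<sigma> k) \<le> x (\<sigma> j)" if "k < j" "j < length L" for k j
    proof -
      have "L ! k < L ! j"
        using sorted_wrt_nth_less[OF L(1)] that by blast
      then show ?thesis
        using before[OF \<sigma>(1) \<sigma>(1)] \<sigma>(2) that by (metis order.strict_iff_not order.strict_trans)
    qed
  qed
qed

text \<open>The definition of absolute continuity asks for intervals listed in increasing order; any
  finite disjoint family of nonempty intervals can be listed so.\<close>

lemma abs_cont_on_disjoint_intervals:
  fixes f :: "real \<Rightarrow> real"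
  assumes "abs_cont_on a b f" and "e > 0"
  obtains d where "d > 0"
    and "\<And>(X :: 'i set) x y. finite X \<Longrightarrow> (\<And>i. i \<in> X \<Longrightarrow> a \<le> x i \<and> x i < y i \<and> y i \<le> b) \<Longrightarrow>
           disjoint_family_on (\<lambda>i. {x i<..<y i}) X \<Longrightarrow> (\<Sum>i\<in>X. y i - x i) < d \<Longrightarrow>
           (\<Sum>i\<in>X. \<bar>f (y i) - f (x i)\<bar>) < e"
proof -
  obtain d where "d > 0" and d: "\<And>(n::nat) u v. (\<forall>i<n. a \<le> u i \<and> u i \<le> v i \<and> v i \<le> b) \<and>
      (\<forall>i<n. \<forall>j<n. i < j \<longrightarrow> v i \<le> u j) \<and> (\<Sum>i<n. v i - u i) < d
      \<Longrightarrow> (\<Sum>i<n. \<bar>f (v i) - f (u i)\<bar>) < e"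
    using assms unfolding abs_cont_on_def by blast
  show thesis
  proof (rule that[OF \<open>d > 0\<close>])
    fix X :: "'i set" and x y :: "'i \<Rightarrow> real"
    assume "finite X" and range: "\<And>i. i \<in> X \<Longrightarrow> a \<le> x i \<and> x i < y i \<and> y i \<le> b"
      and "disjoint_family_on (\<lambda>i. {x i<..<y i}) X" and short: "(\<Sum>i\<in>X. y i - x i) < d"
    show "(\<Sum>i\<in>X. \<bar>f (y i) - f (x i)\<bar>) < e"
    proof (rule disjoint_intervals_enumeration[OF \<open>finite X\<close> _ \<open>disjoint_family_on _ X\<close>])
      show "x i < y i" if "i \<in> X" for i
        using range[OF that] by simp
      fix n and \<sigma> :: "nat \<Rightarrow> 'i"
      assume \<sigma>: "bij_betw \<sigma> {..<n} X" and ordered: "\<And>k j. k < j \<Longrightarrow> j < n \<Longrightarrow> y (\<sigma> k) \<le> x (\<sigma> j)"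
      have sum_\<sigma>: "(\<Sum>k<n. h (\<sigma> k)) = (\<Sum>i\<in>X. h i)" for h :: "'i \<Rightarrow> real"
        using sum.reindex_bij_betw[OF \<sigma>] .
      have "a \<le> x (\<sigma> k) \<and> x (\<sigma> k) \<le> y (\<sigma> k) \<and> y (\<sigma> k) \<le> b" if "k < n" for k
        using range[OF bij_betw_apply[OF \<sigma>]] that by (simp add: less_imp_le)
      moreover have "(\<Sum>k<n. y (\<sigma> k) - x (\<sigma> k)) < d"
        using short sum_\<sigma>[of "\<lambda>i. y i - x i"] by simp
      ultimately have "(\<Sum>k<n. \<bar>f (y (\<sigma> k)) - f (x (\<sigma> k))\<bar>) < e"
        using d[of n "\<lambda>k. x (\<sigma> k)" "\<lambda>k. y (\<sigma> k)"] ordered by blast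
      then show ?thesis
        using sum_\<sigma>[of "\<lambda>i. \<bar>f (y i) - f (x i)\<bar>"] by simp
    qed
  qed
qed

lemma negligible_fine_content_small:
  fixes N :: "'a::euclidean_space set"
  assumes "negligible N" and "d > 0"
  obtains \<gamma> where "gauge \<gamma>"
    and "\<And>p. p tagged_division_of cbox a b \<Longrightarrow> \<gamma> fine p \<Longrightarrow>
           (\<Sum>(t, K)\<in>p. Henstock_Kurzweil_Integration.content K * indicator N t) < d"
proof -
  have "(indicator N has_integral (0::real)) (cbox a b)"
    using assms(1) unfolding negligible_def by blast
  then obtain \<gamma> where "gauge \<gamma>" and \<gamma>: "\<And>p. p tagged_division_of cbox a b \<Longrightarrow> \<gamma> fine p \<Longrightarrow>
      norm ((\<Sum>(t, K)\<in>p. Henstock_Kurzweil_Integration.content K *\<^sub>R (indicator N t :: real)) - 0) < d"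
    using assms(2) unfolding has_integral by meson
  show thesis
  proof (rule that[OF \<open>gauge \<gamma>\<close>])
    fix p
    assume "p tagged_division_of cbox a b" "\<gamma> fine p"
    then have "norm ((\<Sum>(t, K)\<in>p. Henstock_Kurzweil_Integration.content K *\<^sub>R (indicator N t :: real)) - 0) < d"
      by (rule \<gamma>)
    then show "(\<Sum>(t, K)\<in>p. Henstock_Kurzweil_Integration.content K * indicator N t) < d"
      by (simp add: split_def)
  qed
qed

lemma has_real_derivative_straddle:
  assumes "(f has_real_derivative D) (at t within S)" and "\<epsilon> > 0"
  obtains r where "r > 0"
    and "\<And>u v. u \<in> S \<Longrightarrow> v \<in> S \<Longrightarrow> u \<le> t \<Longrightarrow> t \<le> v \<Longrightarrow> u \<in> ball t r \<Longrightarrow> v \<in> ball t r \<Longrightarrow>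
           \<bar>f v - f u\<bar> \<le> (\<bar>D\<bar> + \<epsilon>) * (v - u)"
proof -
  obtain r where "r > 0" and r: "\<And>y. y \<in> S \<Longrightarrow> \<bar>y - t\<bar> < r \<Longrightarrow>
      \<bar>f y - f t - D * (y - t)\<bar> \<le> \<epsilon> * \<bar>y - t\<bar>"
    using assms unfolding has_field_derivative_def has_derivative_within_alt by fastforce
  show thesis
  proof (rule that[OF \<open>r > 0\<close>])
    fix u v
    assume "u \<in> S" "v \<in> S" "u \<le> t" "t \<le> v" "u \<in> ball t r" "v \<in> ball t r"
    then have "\<bar>f v - f t - D * (v - t)\<bar> \<le> \<epsilon> * (v - t)" "\<bar>f u - f t - D * (u - t)\<bar> \<le> \<epsilon> * (t - u)"
      using r[of u] r[of v] by (auto simp: dist_real_def abs_minus_commute)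
    moreover have "\<bar>D * (v - t)\<bar> \<le> \<bar>D\<bar> * (v - t)" "\<bar>D * (u - t)\<bar> \<le> \<bar>D\<bar> * (t - u)"
      using \<open>u \<le> t\<close> \<open>t \<le> v\<close> by (simp_all add: abs_mult)
    ultimately show "\<bar>f v - f u\<bar> \<le> (\<bar>D\<bar> + \<epsilon>) * (v - u)"
      by (simp add: algebra_simps) linarith
  qed
qed

lemma has_real_derivative_straddle_gauge:
  assumes "\<And>t. t \<in> T \<Longrightarrow> (f has_real_derivative D t) (at t within S)" and "\<epsilon> > 0"
  obtains r where "\<And>t. 0 < r t"
    and "\<And>t u v. t \<in> T \<Longrightarrow> u \<in> S \<Longrightarrow> v \<in> S \<Longrightarrow> u \<le> t \<Longrightarrow> t \<le> v \<Longrightarrow>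
           u \<in> ball t (r t) \<Longrightarrow> v \<in> ball t (r t) \<Longrightarrow> \<bar>f v - f u\<bar> \<le> (\<bar>D t\<bar> + \<epsilon>) * (v - u)"
proof -
  have "\<forall>t. \<exists>r>0. t \<in> T \<longrightarrow> (\<forall>u v. u \<in> S \<longrightarrow> v \<in> S \<longrightarrow> u \<le> t \<longrightarrow> t \<le> v \<longrightarrow>
      u \<in> ball t r \<longrightarrow> v \<in> ball t r \<longrightarrow> \<bar>f v - f u\<bar> \<le> (\<bar>D t\<bar> + \<epsilon>) * (v - u))"
  proof
    fix t
    show "\<exists>r>0. t \<in> T \<longrightarrow> (\<forall>u v. u \<in> S \<longrightarrow> v \<in> S \<longrightarrow> u \<le> t \<longrightarrow> t \<le> v \<longrightarrow>
      u \<in> ball t r \<longrightarrow> v \<in> ball t r \<longrightarrow> \<bar>f v - f u\<bar> \<le> (\<bar>D t\<bar> + \<epsilon>) * (v - u))"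
    proof (cases "t \<in> T")
      case True
      show ?thesis
      proof (rule has_real_derivative_straddle[OF assms(1)[OF True] \<open>\<epsilon> > 0\<close>])
        fix r :: real
        assume "r > 0" and "\<And>u v. u \<in> S \<Longrightarrow> v \<in> S \<Longrightarrow> u \<le> t \<Longrightarrow> t \<le> v \<Longrightarrow>
          u \<in> ball t r \<Longrightarrow> v \<in> ball t r \<Longrightarrow> \<bar>f v - f u\<bar> \<le> (\<bar>D t\<bar> + \<epsilon>) * (v - u)"
        then show ?thesis
          by blast
      qed
    qed (auto intro: zero_less_one)
  qed
  then obtain r where "\<forall>t. 0 < r t" and "\<forall>t. t \<in> T \<longrightarrow> (\<forall>u v. u \<in> S \<longrightarrow> v \<in> S \<longrightarrow> u \<le> t \<longrightarrow> t \<le> v \<longrightarrow>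
      u \<in> ball t (r t) \<longrightarrow> v \<in> ball t (r t) \<longrightarrow> \<bar>f v - f u\<bar> \<le> (\<bar>D t\<bar> + \<epsilon>) * (v - u))"
    unfolding choice_iff by blast
  then show thesis
    by (intro that) blast+
qed

lemma tagged_division_of_real_interval:
  fixes a b :: real
  assumes "p tagged_division_of {a..b}" and "(t, K) \<in> p"
  shows "a \<le> Inf K" and "Inf K \<le> t" and "t \<le> Sup K" and "Sup K \<le> b"
    and "Inf K \<in> K" and "Sup K \<in> K"
    and "interior K = {Inf K<..<Sup K}" and "Henstock_Kurzweil_Integration.content K = Sup K - Inf K"
proof -
  obtain u v where "K = cbox u v"
    using tagged_division_ofD(4)[OF assms] by blast
  then have K: "K = {u..v}"
    by (simp add: cbox_interval)
  moreover have "t \<in> K" "K \<subseteq> {a..b}"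
    using tagged_division_ofD(2,3)[OF assms] by auto
  ultimately have "u \<le> t" "t \<le> v" "a \<le> u" "v \<le> b" "Inf K = u" "Sup K = v"
    by auto
  then show "a \<le> Inf K" "Inf K \<le> t" "t \<le> Sup K" "Sup K \<le> b" "Inf K \<in> K" "Sup K \<in> K"
    and "interior K = {Inf K<..<Sup K}" "Henstock_Kurzweil_Integration.content K = Sup K - Inf K"
    using K by auto
qed

lemma tagged_division_of_real_disjoint:
  fixes a b :: real
  assumes "p tagged_division_of {a..b}"
  shows "disjoint_family_on (\<lambda>i. {Inf (snd i)<..<Sup (snd i)}) p"
  unfolding disjoint_family_on_def
proof (intro ballI impI)
  fix i j
  assume "i \<in> p" "j \<in> p" "i \<noteq> j"
  then have "interior (snd i) \<inter> interior (snd j) = {}"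
    using tagged_division_ofD(5)[OF assms, of "fst i" "snd i" "fst j" "snd j"] by simp
  then show "{Inf (snd i)<..<Sup (snd i)} \<inter> {Inf (snd j)<..<Sup (snd j)} = {}"
    using tagged_division_of_real_interval(7)[OF assms, of "fst i" "snd i"]
      tagged_division_of_real_interval(7)[OF assms, of "fst j" "snd j"] \<open>i \<in> p\<close> \<open>j \<in> p\<close> by simp
qed

lemma tagged_division_of_real_sum_nondegenerate:
  fixes a b :: real and f :: "real \<Rightarrow> real"
  assumes p: "p tagged_division_of {a..b}"
  shows "(\<Sum>(t, K)\<in>p. if t \<in> N then \<bar>f (Sup K) - f (Inf K)\<bar> else 0)
    = (\<Sum>i\<in>{i \<in> p. fst i \<in> N \<and> Inf (snd i) < Sup (snd i)}. \<bar>f (Sup (snd i)) - f (Inf (snd i))\<bar>)"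
proof (rule sum.mono_neutral_cong_right)
  show "finite p"
    using p by (rule tagged_division_ofD(1))
  show "\<forall>i\<in>p - {i \<in> p. fst i \<in> N \<and> Inf (snd i) < Sup (snd i)}.
      (case i of (t, K) \<Rightarrow> if t \<in> N then \<bar>f (Sup K) - f (Inf K)\<bar> else 0) = 0"
  proof
    fix i
    assume i: "i \<in> p - {i \<in> p. fst i \<in> N \<and> Inf (snd i) < Sup (snd i)}"
    moreover have "Inf (snd i) \<le> fst i" "fst i \<le> Sup (snd i)"
      using tagged_division_of_real_interval(2,3)[OF p, of "fst i" "snd i"] i by auto
    ultimately have "fst i \<in> N \<Longrightarrow> Sup (snd i) = Inf (snd i)"
      by auto
    then show "(case i of (t, K) \<Rightarrow> if t \<in> N then \<bar>f (Sup K) - f (Inf K)\<bar> else 0) = 0"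
      by (auto simp: split_def)
  qed
qed (auto simp: split_def)

text \<open>Tags in a null set carry intervals of small total length, so absolute continuity makes
  their contribution to the variation small.\<close>

lemma abs_cont_on_negligible_tags:
  fixes f :: "real \<Rightarrow> real"
  assumes "abs_cont_on a b f" and "negligible N" and "\<epsilon> > 0"
  obtains \<gamma> where "gauge \<gamma>"
    and "\<And>p. p tagged_division_of {a..b} \<Longrightarrow> \<gamma> fine p \<Longrightarrow>
           (\<Sum>(t, K)\<in>p. if t \<in> N then \<bar>f (Sup K) - f (Inf K)\<bar> else 0) < \<epsilon>"
proof (rule abs_cont_on_disjoint_intervals[OF assms(1,3), where 'i = "real \<times> real set"])
  fix d
  assume "d > 0" and small: "\<And>(X :: (real \<times> real set) set) x y. finite X \<Longrightarrow>
      (\<And>i. i \<in> X \<Longrightarrow> a \<le> x i \<and> x i < y i \<and> y i \<le> b) \<Longrightarrow>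
      disjoint_family_on (\<lambda>i. {x i<..<y i}) X \<Longrightarrow> (\<Sum>i\<in>X. y i - x i) < d \<Longrightarrow>
      (\<Sum>i\<in>X. \<bar>f (y i) - f (x i)\<bar>) < \<epsilon>"
  obtain \<gamma> where "gauge \<gamma>" and \<gamma>: "\<And>p. p tagged_division_of cbox a b \<Longrightarrow> \<gamma> fine p \<Longrightarrow>
      (\<Sum>(t, K)\<in>p. Henstock_Kurzweil_Integration.content K * indicator N t) < d"
    using negligible_fine_content_small[OF assms(2) \<open>d > 0\<close>] by metis
  have "(\<Sum>(t, K)\<in>p. if t \<in> N then \<bar>f (Sup K) - f (Inf K)\<bar> else 0) < \<epsilon>"
    if p: "p tagged_division_of {a..b}" and "\<gamma> fine p" for p
  proof -
    define X where "X = {i \<in> p. fst i \<in> N \<and> Inf (snd i) < Sup (snd i)}"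
    have "finite p"
      using p by (rule tagged_division_ofD(1))
    then have "finite X"
      unfolding X_def by simp
    have "(\<Sum>(t, K)\<in>p. if t \<in> N then \<bar>f (Sup K) - f (Inf K)\<bar> else 0)
        = (\<Sum>i\<in>X. \<bar>f (Sup (snd i)) - f (Inf (snd i))\<bar>)"
      unfolding X_def by (rule tagged_division_of_real_sum_nondegenerate[OF p])
    also have "\<dots> < \<epsilon>"
    proof (rule small[OF \<open>finite X\<close>])
      show "a \<le> Inf (snd i) \<and> Inf (snd i) < Sup (snd i) \<and> Sup (snd i) \<le> b" if "i \<in> X" for i
        using that tagged_division_of_real_interval[OF p, of "fst i" "snd i"] by (auto simp: X_def)
      show "disjoint_family_on (\<lambda>i. {Inf (snd i)<..<Sup (snd i)}) X"
        using tagged_division_of_real_disjoint[OF p]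
        by (rule disjoint_family_on_mono[rotated]) (auto simp: X_def)
      have "(\<Sum>i\<in>X. Sup (snd i) - Inf (snd i))
          = (\<Sum>i\<in>X. Henstock_Kurzweil_Integration.content (snd i) * indicator N (fst i))"
      proof (rule sum.cong)
        fix i
        assume "i \<in> X"
        then have "i \<in> p" "Inf (snd i) < Sup (snd i)" "fst i \<in> N"
          by (auto simp: X_def)
        with tagged_division_of_real_interval(8)[OF p, of "fst i" "snd i"]
        show "Sup (snd i) - Inf (snd i)
            = Henstock_Kurzweil_Integration.content (snd i) * indicator N (fst i)"
          by simp
      qed simp
      also have "\<dots> \<le> (\<Sum>(t, K)\<in>p. Henstock_Kurzweil_Integration.content K * indicator N t)"
        unfolding split_def using \<open>finite p\<close> by (intro sum_mono2) (auto simp: X_def)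
      also have "\<dots> < d"
        using \<gamma>[of p] p \<open>\<gamma> fine p\<close> by (simp add: cbox_interval)
      finally show "(\<Sum>i\<in>X. Sup (snd i) - Inf (snd i)) < d" .
    qed
    finally show ?thesis .
  qed
  with \<open>gauge \<gamma>\<close> show thesis by (rule that)
qed

lemma fine_tagged_division_increment_bound:
  fixes f :: "real \<Rightarrow> real"
  assumes "a \<le> b" and p: "p tagged_division_of {a..b}" and fine: "(\<lambda>t. ball t (r t)) fine p"
    and "0 \<le> L"
    and local_bound: "\<And>t u v. t \<in> {a..b} \<Longrightarrow> t \<notin> N \<Longrightarrow> u \<in> {a..b} \<Longrightarrow> v \<in> {a..b} \<Longrightarrow>
      u \<le> t \<Longrightarrow> t \<le> v \<Longrightarrow> u \<in> ball t (r t) \<Longrightarrow> v \<in> ball t (r t) \<Longrightarrow> \<bar>f v - f u\<bar> \<le> L * (v - u)"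
  shows "\<bar>f b - f a\<bar> \<le> L * (b - a) + (\<Sum>(t, K)\<in>p. if t \<in> N then \<bar>f (Sup K) - f (Inf K)\<bar> else 0)"
proof -
  have per_tag: "\<bar>f (Sup K) - f (Inf K)\<bar> \<le> L * Henstock_Kurzweil_Integration.content K
      + (if t \<in> N then \<bar>f (Sup K) - f (Inf K)\<bar> else 0)" if "(t, K) \<in> p" for t K
  proof (cases "t \<in> N")
    case False
    note K = tagged_division_of_real_interval[OF p that]
    have "Inf K \<in> ball t (r t)" "Sup K \<in> ball t (r t)"
      using fineD[OF fine that] K(5,6) by auto
    then show ?thesis
      using local_bound[of t "Inf K" "Sup K"] K False by simp
  qed (use \<open>0 \<le> L\<close> in simp)
  have "\<bar>f b - f a\<bar> = \<bar>\<Sum>(t, K)\<in>p. f (Sup K) - f (Inf K)\<bar>"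
    using additive_tagged_division_1[OF \<open>a \<le> b\<close> p, of f] by simp
  also have "\<dots> \<le> (\<Sum>(t, K)\<in>p. \<bar>f (Sup K) - f (Inf K)\<bar>)"
    unfolding split_def by (rule sum_abs)
  also have "\<dots> \<le> (\<Sum>(t, K)\<in>p. L * Henstock_Kurzweil_Integration.content K
      + (if t \<in> N then \<bar>f (Sup K) - f (Inf K)\<bar> else 0))"
    using per_tag by (intro sum_mono) auto
  also have "\<dots> = L * (b - a) + (\<Sum>(t, K)\<in>p. if t \<in> N then \<bar>f (Sup K) - f (Inf K)\<bar> else 0)"
    using additive_content_tagged_division[of p a b] p \<open>a \<le> b\<close>
    by (simp add: split_def sum.distrib cbox_interval flip: sum_distrib_left)
  finally show ?thesis .
qed

text \<open>Cousin's lemma on a gauge that is fine enough for the derivative at tags outside N and for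
  absolute continuity at tags inside N.\<close>

lemma abs_cont_on_lipschitz_ae:
  fixes f D :: "real \<Rightarrow> real"
  assumes "a \<le> b" and "abs_cont_on a b f" and "negligible N" and "0 \<le> M"
    and der: "\<And>t. t \<in> {a..b} \<Longrightarrow> t \<notin> N \<Longrightarrow> (f has_real_derivative D t) (at t within {a..b})"
    and bound: "\<And>t. t \<in> {a..b} \<Longrightarrow> t \<notin> N \<Longrightarrow> \<bar>D t\<bar> \<le> M"
  shows "\<bar>f b - f a\<bar> \<le> M * (b - a)"
proof (rule field_le_epsilon)
  fix e :: real
  assume "e > 0"
  define \<epsilon> where "\<epsilon> = e / (b - a + 1)"
  have "\<epsilon> > 0" and e_eq: "e = \<epsilon> * (b - a + 1)"
    using \<open>e > 0\<close> \<open>a \<le> b\<close> by (simp_all add: \<epsilon>_def)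
  obtain r where r_pos: "\<And>t. 0 < r t" and straddle: "\<And>t u v. t \<in> {a..b} - N \<Longrightarrow>
      u \<in> {a..b} \<Longrightarrow> v \<in> {a..b} \<Longrightarrow> u \<le> t \<Longrightarrow> t \<le> v \<Longrightarrow> u \<in> ball t (r t) \<Longrightarrow> v \<in> ball t (r t) \<Longrightarrow>
      \<bar>f v - f u\<bar> \<le> (\<bar>D t\<bar> + \<epsilon>) * (v - u)"
    using has_real_derivative_straddle_gauge[of "{a..b} - N" f D "{a..b}", OF _ \<open>\<epsilon> > 0\<close>] der
    by blast
  show "\<bar>f b - f a\<bar> \<le> M * (b - a) + e"
  proof (rule abs_cont_on_negligible_tags[OF assms(2,3) \<open>\<epsilon> > 0\<close>])
    fix \<gamma>
    assume "gauge \<gamma>" and null_tags: "\<And>p. p tagged_division_of {a..b} \<Longrightarrow> \<gamma> fine p \<Longrightarrow>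
      (\<Sum>(t, K)\<in>p. if t \<in> N then \<bar>f (Sup K) - f (Inf K)\<bar> else 0) < \<epsilon>"
    have "gauge (\<lambda>t. \<gamma> t \<inter> ball t (r t))"
      using \<open>gauge \<gamma>\<close> r_pos by (intro gauge_Int gauge_ball_dependent) auto
    then obtain p where "p tagged_division_of cbox a b" and fine: "(\<lambda>t. \<gamma> t \<inter> ball t (r t)) fine p"
      by (rule fine_division_exists)
    then have p: "p tagged_division_of {a..b}"
      by (simp add: cbox_interval)
    have "\<gamma> fine p" and "(\<lambda>t. ball t (r t)) fine p"
      using fine by (auto simp: fine_def)
    have "\<bar>f b - f a\<bar> \<le> (M + \<epsilon>) * (b - a)
        + (\<Sum>(t, K)\<in>p. if t \<in> N then \<bar>f (Sup K) - f (Inf K)\<bar> else 0)"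
    proof (rule fine_tagged_division_increment_bound[OF \<open>a \<le> b\<close> p \<open>(\<lambda>t. ball t (r t)) fine p\<close>])
      show "0 \<le> M + \<epsilon>"
        using \<open>0 \<le> M\<close> \<open>\<epsilon> > 0\<close> by simp
      fix t u v
      assume "t \<in> {a..b}" "t \<notin> N" "u \<in> {a..b}" "v \<in> {a..b}" "u \<le> t" "t \<le> v"
        "u \<in> ball t (r t)" "v \<in> ball t (r t)"
      then have "\<bar>f v - f u\<bar> \<le> (\<bar>D t\<bar> + \<epsilon>) * (v - u)"
        using straddle by blast
      also have "\<dots> \<le> (M + \<epsilon>) * (v - u)"
        using bound[of t] \<open>t \<in> {a..b}\<close> \<open>t \<notin> N\<close> \<open>u \<le> t\<close> \<open>t \<le> v\<close> by (intro mult_right_mono) auto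
      finally show "\<bar>f v - f u\<bar> \<le> (M + \<epsilon>) * (v - u)" .
    qed
    also have "\<dots> < (M + \<epsilon>) * (b - a) + \<epsilon>"
      using null_tags[OF p \<open>\<gamma> fine p\<close>] by simp
    finally show "\<bar>f b - f a\<bar> \<le> M * (b - a) + e"
      unfolding e_eq by (simp add: algebra_simps)
  qed
qed

lemma abs_cont_on_linear_bound_vanishes_short:
  fixes f D :: "real \<Rightarrow> real"
  assumes "s \<le> s'" and "abs_cont_on s s' f" and "negligible N" and "0 \<le> K"
    and der: "\<And>t. t \<in> {s..s'} \<Longrightarrow> t \<notin> N \<Longrightarrow> (f has_real_derivative D t) (at t within {s..s'})"
    and bound: "\<And>t. t \<in> {s..s'} \<Longrightarrow> t \<notin> N \<Longrightarrow> \<bar>D t\<bar> \<le> K * \<bar>f t\<bar>"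
    and "K * (s' - s) < 1" and "f s = 0" and "t \<in> {s..s'}"
  shows "f t = 0"
proof -
  have "continuous_on {s..s'} (\<lambda>t. \<bar>f t\<bar>)"
    using abs_cont_on_imp_continuous_on[OF assms(2)] by (rule continuous_on_rabs)
  then obtain tm where tm: "tm \<in> {s..s'}" and max: "\<And>u. u \<in> {s..s'} \<Longrightarrow> \<bar>f u\<bar> \<le> \<bar>f tm\<bar>"
    using continuous_attains_sup[of "{s..s'}"] \<open>s \<le> s'\<close> by fastforce
  have "\<bar>f tm - f s\<bar> \<le> (K * \<bar>f tm\<bar>) * (tm - s)"
  proof (rule abs_cont_on_lipschitz_ae[OF _ _ \<open>negligible N\<close>])
    show "abs_cont_on s tm f"
      using abs_cont_on_subinterval[OF assms(2)] tm by simp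
    show "(f has_real_derivative D u) (at u within {s..tm})" if "u \<in> {s..tm}" "u \<notin> N" for u
      using der[of u] that tm by (auto intro: DERIV_subset)
    show "\<bar>D u\<bar> \<le> K * \<bar>f tm\<bar>" if "u \<in> {s..tm}" "u \<notin> N" for u
      using bound[of u] max[of u] mult_left_mono[OF _ \<open>0 \<le> K\<close>] that tm by force
  qed (use tm \<open>0 \<le> K\<close> in auto)
  also have "\<dots> \<le> \<bar>f tm\<bar> * (K * (s' - s))"
    using tm \<open>0 \<le> K\<close> by (simp add: mult_left_mono mult.assoc mult.left_commute)
  finally have "\<bar>f tm\<bar> * (1 - K * (s' - s)) \<le> 0"
    using \<open>f s = 0\<close> by (simp add: algebra_simps)
  then have "\<bar>f tm\<bar> = 0"
    using \<open>K * (s' - s) < 1\<close> by (simp add: mult_le_0_iff)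
  then show "f t = 0"
    using max[OF \<open>t \<in> {s..s'}\<close>] by simp
qed

lemma abs_cont_on_linear_bound_vanishes:
  fixes f D :: "real \<Rightarrow> real"
  assumes "abs_cont_on c b f" and "negligible N" and "0 \<le> K"
    and der: "\<And>t. t \<in> {c..b} \<Longrightarrow> t \<notin> N \<Longrightarrow> (f has_real_derivative D t) (at t within {c..b})"
    and bound: "\<And>t. t \<in> {c..b} \<Longrightarrow> t \<notin> N \<Longrightarrow> \<bar>D t\<bar> \<le> K * \<bar>f t\<bar>"
    and "f c = 0" and "t \<in> {c..b}"
  shows "f t = 0"
proof -
  have "c \<le> b"
    using \<open>t \<in> {c..b}\<close> by simp
  define h where "h = 1 / (K + 1)"
  have "h > 0" and "K * h < 1"
    using \<open>0 \<le> K\<close> by (simp_all add: h_def)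
  have vanish_upto: "\<forall>t\<in>{c..min b (c + real n * h)}. f t = 0" for n
  proof (induction n)
    case 0
    then show ?case
      using \<open>f c = 0\<close> by auto
  next
    case (Suc n)
    define s where "s = min b (c + real n * h)"
    define s' where "s' = min b (c + real (Suc n) * h)"
    have "c \<le> s" "s \<le> s'" "s' \<le> b" "s' - s \<le> h"
      using \<open>c \<le> b\<close> \<open>h > 0\<close> by (auto simp: s_def s'_def algebra_simps)
    have "abs_cont_on s s' f"
      using abs_cont_on_subinterval[OF assms(1) \<open>c \<le> s\<close> \<open>s' \<le> b\<close>] .
    moreover have "(f has_real_derivative D t) (at t within {s..s'})" if "t \<in> {s..s'}" "t \<notin> N" for t
      using der[of t] that \<open>c \<le> s\<close> \<open>s' \<le> b\<close> by (auto intro: DERIV_subset)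
    moreover have "\<bar>D t\<bar> \<le> K * \<bar>f t\<bar>" if "t \<in> {s..s'}" "t \<notin> N" for t
      using bound[of t] that \<open>c \<le> s\<close> \<open>s' \<le> b\<close> by auto
    moreover have "K * (s' - s) < 1"
      using mult_left_mono[OF \<open>s' - s \<le> h\<close> \<open>0 \<le> K\<close>] \<open>K * h < 1\<close> by linarith
    moreover have "f s = 0"
      using Suc.IH \<open>c \<le> s\<close> by (auto simp: s_def)
    ultimately have short: "f u = 0" if "u \<in> {s..s'}" for u
      using abs_cont_on_linear_bound_vanishes_short[OF \<open>s \<le> s'\<close> _ \<open>negligible N\<close> \<open>0 \<le> K\<close>] that
      by blast
    show ?case
    proof
      fix t
      assume "t \<in> {c..min b (c + real (Suc n) * h)}"
      then show "f t = 0"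
        using Suc.IH short[of t] \<open>c \<le> s\<close> by (cases "t \<le> s") (auto simp: s_def s'_def)
    qed
  qed
  obtain n where "t - c < real n * h"
    using ex_less_of_nat_mult[OF \<open>h > 0\<close>] by blast
  then show "f t = 0"
    using vanish_upto[of n] \<open>t \<in> {c..b}\<close> by auto
qed

lemma has_real_derivative_zero_if_locally_constant:
  assumes "(f has_real_derivative D) (at x within S)"
    and "open T" and "x \<in> T" and "T \<subseteq> S" and "\<And>y. y \<in> T \<Longrightarrow> f y = f x"
  shows "D = 0"
proof -
  have "(f has_real_derivative D) (at x)"
    using DERIV_subset[OF assms(1,4)] at_within_open[OF assms(3,2)] by simp
  then have "((\<lambda>_. f x) has_real_derivative D) (at x)"
    by (rule has_field_derivative_transform_within_open[OF _ assms(2,3)]) (use assms(5) in simp)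
  then show "D = 0"
    using DERIV_const DERIV_unique by blast
qed

lemma interval_not_subset_negligible:
  fixes a b :: real
  assumes "a < b" and "negligible N"
  obtains c where "c \<in> {a<..<b}" and "c \<notin> N"
proof -
  have "\<not> negligible {a<..<b}"
    using open_not_negligible[of "{a<..<b}"] assms(1) by simp
  then have "\<not> {a<..<b} \<subseteq> N"
    using negligible_subset[OF assms(2)] by blast
  then show thesis
    using that by blast
qed

lemma beta_hat_bounds:
  assumes "bmin \<le> bmax" and "0 < Imax" and "0 \<le> I" and "I \<le> Imax"
  shows "bmin \<le> beta_hat bmin bmax Imax I" and "beta_hat bmin bmax Imax I \<le> bmax"
proof -
  have "beta_hat bmin bmax Imax I = bmax - (bmax - bmin) * (I / Imax)"
    using assms(2) unfolding beta_hat_def by (simp add: field_simps)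
  moreover have "(bmax - bmin) * (I / Imax) \<le> bmax - bmin"
    using assms by (intro mult_left_le) simp_all
  moreover have "0 \<le> (bmax - bmin) * (I / Imax)"
    using assms by simp
  ultimately show "bmin \<le> beta_hat bmin bmax Imax I" and "beta_hat bmin bmax Imax I \<le> bmax"
    by linarith+
qed

lemma alpha_fun_pos:
  assumes "bmin \<le> bmax" and "0 < Imax" and "I \<le> Imax" and "bmax < 2 * bmin"
  shows "0 < alpha_fun bmin bmax Imax I"
proof -
  define x where "x = (bmax - bmin) * (I / Imax)"
  have "alpha_fun bmin bmax Imax I = bmax - 2 * x"
    using assms(2) unfolding alpha_fun_def x_def by (simp add: field_simps)
  moreover have "x \<le> bmax - bmin"
    using assms unfolding x_def by (intro mult_left_le) simp_all
  ultimately show ?thesis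
    using assms(4) by linarith
qed

lemma susceptible_rate_bound:
  assumes "0 \<le> bmin" and "bmin \<le> bmax" and "0 < Imax" and "Imax \<le> 1" and "0 \<le> I" and "I \<le> Imax"
  shows "\<bar>beta_hat bmin bmax Imax I * s * I\<bar> \<le> bmax * \<bar>s\<bar>"
proof -
  have "0 \<le> beta_hat bmin bmax Imax I" "beta_hat bmin bmax Imax I \<le> bmax"
    using beta_hat_bounds[OF assms(2,3,5,6)] assms(1) by linarith+
  then have "beta_hat bmin bmax Imax I * I \<le> bmax * 1"
    using assms(4-6) by (intro mult_mono) simp_all
  then have "beta_hat bmin bmax Imax I * I * \<bar>s\<bar> \<le> bmax * \<bar>s\<bar>"
    by (simp add: mult_right_mono)
  moreover have "\<bar>beta_hat bmin bmax Imax I * s * I\<bar> = beta_hat bmin bmax Imax I * I * \<bar>s\<bar>"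
    using \<open>0 \<le> beta_hat bmin bmax Imax I\<close> assms(5) by (simp add: abs_mult)
  ultimately show ?thesis
    by simp
qed

lemma susceptible_stays_zero:
  assumes "0 \<le> bmin" and "bmin \<le> bmax" and "0 < Imax" and "Imax \<le> 1"
    and "abs_cont_on t0 t1 S" and "negligible N"
    and ode: "\<And>t. t \<in> {t0..t1} \<Longrightarrow> t \<notin> N \<Longrightarrow>
        (S has_real_derivative (- beta_hat bmin bmax Imax (I t) * S t * I t)) (at t within {t0..t1})"
    and constraint: "\<And>t. t \<in> {t0..t1} \<Longrightarrow> 0 \<le> I t \<and> I t \<le> Imax"
    and "t0 \<le> c" and "S c = 0" and "t \<in> {c..t1}"
  shows "S t = 0"
proof (rule abs_cont_on_linear_bound_vanishes[where f = S and K = bmax and t = t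
    and D = "\<lambda>u. - beta_hat bmin bmax Imax (I u) * S u * I u"])
  show "abs_cont_on c t1 S"
    using abs_cont_on_subinterval[OF assms(5) \<open>t0 \<le> c\<close> order_refl] .
  show "(S has_real_derivative (- beta_hat bmin bmax Imax (I u) * S u * I u)) (at u within {c..t1})"
    if "u \<in> {c..t1}" "u \<notin> N" for u
    using ode[of u] that \<open>t0 \<le> c\<close> by (auto intro: DERIV_subset)
  show "\<bar>- beta_hat bmin bmax Imax (I u) * S u * I u\<bar> \<le> bmax * \<bar>S u\<bar>" if "u \<in> {c..t1}" for u
    using susceptible_rate_bound[OF assms(1-4)] constraint[of u] that \<open>t0 \<le> c\<close> by simp
qed (use assms in auto)

theorem proposition7:
  fixes bmin bmax gmin gmax Imax t0 tbar :: real
    and S I lam1 lam2 gbar :: "real \<Rightarrow> real"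
  assumes params: "0 < bmin" "bmin \<le> bmax" "0 < gmin" "gmin \<le> gmax" "0 < Imax" "Imax \<le> 1"
    and times: "t0 < tbar"
    and gbar_meas: "gbar \<in> borel_measurable (restrict_space lebesgue {t0..})"
    and gbar_range: "\<forall>t\<ge>t0. gmin \<le> gbar t \<and> gbar t \<le> gmax"
    and ac_state: "abs_cont_on t0 tbar S" "abs_cont_on t0 tbar I"
    and ode_state: "AE t in lebesgue. t \<in> {t0..tbar} \<longrightarrow>
        (S has_real_derivative (- beta_hat bmin bmax Imax (I t) * S t * I t)) (at t within {t0..tbar}) \<and>
        (I has_real_derivative (beta_hat bmin bmax Imax (I t) * S t * I t - gbar t * I t)) (at t within {t0..tbar})"
    and in_constraint: "\<forall>t\<in>{t0..tbar}. 0 \<le> I t \<and> I t \<le> Imax"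
    and hit: "I tbar = Imax"
    and tangent: "(SUP g\<in>{gmin..gmax}. beta_hat bmin bmax Imax (I tbar) * S tbar * I tbar - g * I tbar) = 0"
    and ac_adj: "abs_cont_on t0 tbar lam1" "abs_cont_on t0 tbar lam2"
    and ode_adj: "AE t in lebesgue. t \<in> {t0..tbar} \<longrightarrow>
        (lam1 has_real_derivative
           (beta_hat bmin bmax Imax (I t) * I t * lam1 t - beta_hat bmin bmax Imax (I t) * I t * lam2 t))
           (at t within {t0..tbar}) \<and>
        (lam2 has_real_derivative
           (alpha_fun bmin bmax Imax (I t) * S t * lam1 t
            + (- alpha_fun bmin bmax Imax (I t) * S t + gbar t) * lam2 t))
           (at t within {t0..tbar})"
    and adj_nonzero: "\<forall>t\<in>{t0..tbar}. (lam1 t, lam2 t) \<noteq> (0, 0)"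
    and adj_final: "lam1 tbar = 0" "lam2 tbar = 1"
    and input_pos: "\<forall>t\<in>{t0..tbar}. lam2 t > 0 \<longrightarrow> gbar t = gmin"
    and input_neg: "\<forall>t\<in>{t0..tbar}. lam2 t < 0 \<longrightarrow> gbar t = gmax"
    and z1_nonzero: "S tbar \<noteq> 0"
    and beta_cond: "2 * bmin > bmax"
  shows "\<forall>a b. t0 \<le> a \<and> a < b \<and> b \<le> tbar \<longrightarrow> \<not> (\<forall>t\<in>{a<..<b}. lam2 t = 0)"
proof (intro allI impI notI)
  fix a b
  assume ab: "t0 \<le> a \<and> a < b \<and> b \<le> tbar" and lam2_zero: "\<forall>t\<in>{a<..<b}. lam2 t = 0"
  obtain N\<^sub>S where "negligible N\<^sub>S" and state: "\<And>t. t \<notin> N\<^sub>S \<Longrightarrow> t \<in> {t0..tbar} \<Longrightarrow>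
      (S has_real_derivative (- beta_hat bmin bmax Imax (I t) * S t * I t)) (at t within {t0..tbar})"
    using ode_state unfolding eventually_ae_filter_negligible by blast
  obtain N\<^sub>A where "negligible N\<^sub>A" and adjoint: "\<And>t. t \<notin> N\<^sub>A \<Longrightarrow> t \<in> {t0..tbar} \<Longrightarrow>
      (lam2 has_real_derivative (alpha_fun bmin bmax Imax (I t) * S t * lam1 t
        + (- alpha_fun bmin bmax Imax (I t) * S t + gbar t) * lam2 t)) (at t within {t0..tbar})"
    using ode_adj unfolding eventually_ae_filter_negligible by blast
  obtain c where c: "c \<in> {a<..<b}" "c \<notin> N\<^sub>A"
    using interval_not_subset_negligible[OF _ \<open>negligible N\<^sub>A\<close>] ab by blast
  with ab have "c \<in> {t0..tbar}" "lam2 c = 0"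
    using lam2_zero by auto
  then have "lam1 c \<noteq> 0"
    using adj_nonzero by auto
  have "alpha_fun bmin bmax Imax (I c) * S c * lam1 c = 0"
    using has_real_derivative_zero_if_locally_constant[OF adjoint[OF c(2) \<open>c \<in> {t0..tbar}\<close>]
        open_greaterThanLessThan c(1)] lam2_zero ab \<open>lam2 c = 0\<close> by fastforce
  moreover have "0 < alpha_fun bmin bmax Imax (I c)"
    using alpha_fun_pos params in_constraint \<open>c \<in> {t0..tbar}\<close> beta_cond by auto
  ultimately have "S c = 0"
    using \<open>lam1 c \<noteq> 0\<close> by simp
  then have "S tbar = 0"
    using susceptible_stays_zero[OF _ params(2,5,6) ac_state(1) \<open>negligible N\<^sub>S\<close> state] params(1)
      in_constraint \<open>c \<in> {t0..tbar}\<close> by auto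
  with z1_nonzero show False ..
qed

end
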